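(* Let $f=(f_1,f_2):\mathbb{R}^2\to\mathbb{R}^2$ be a smooth one-generic mapping having a cusp point at the origin with $f(\mathbf{0})=\mathbf{0}$, and assume $\operatorname{rank}Df(\mathbf{0})=1$, $dJ(\mathbf{0})\ne0$ and $F(\mathbf{0})=\mathbf{0}$. Then there exist rotations $L(x,y)=(ax-by,bx+ay)$, $R(x,y)=(cx-dy,dx+cy)$ ($a^2+b^2=c^2+d^2=1$) such that $g=(g_1,g_2)=L\circ f\circ R$, with $J'=\det Dg$, satisfies $$\frac{\partial g_1}{\partial x}(\mathbf{0})=\frac{\partial g_2}{\partial x}(\mathbf{0})=\frac{\partial g_2}{\partial y}(\mathbf{0})=0,\quad \frac{\partial g_1}{\partial y}(\mathbf{0})\ne0,\quad \frac{\partial J'}{\partial x}(\mathbf{0})=0,\quad \frac{\partial J'}{\partial y}(\mathbf{0})\ne0.$$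
   Context: $J=\det Df$ and $F=Df\cdot(-\partial J/\partial y,\ \partial J/\partial x)^T$. $f$ is one-generic if $dJ\ne0$ on $J^{-1}(0)$ (equivalently, $j^1f$ is transverse to the corank strata). A point $p\in S_1(f)=J^{-1}(0)$ with $T_pS_1(f)=\ker Df(p)$ is a cusp point if it is a simple zero of $dJ(\xi)$ on $S_1(f)$, $\xi$ a nonvanishing vector field along $S_1(f)$ in $\ker Df$. *)

theory Defs
  imports "HOL-Analysis.Analysis"
begin

definition px :: "(real \<times> real \<Rightarrow> real) \<Rightarrow> real \<times> real \<Rightarrow> real" where
  "px g p = deriv (\<lambda>t. g (t, snd p)) (fst p)"

definition py :: "(real \<times> real \<Rightarrow> real) \<Rightarrow> real \<times> real \<Rightarrow> real" where
  "py g p = deriv (\<lambda>t. g (fst p, t)) (snd p)"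

fun pd :: "bool list \<Rightarrow> (real \<times> real \<Rightarrow> real) \<Rightarrow> (real \<times> real \<Rightarrow> real)" where
  "pd [] g = g"
| "pd (b # bs) g = (if b then py else px) (pd bs g)"

definition smooth_fun :: "(real \<times> real \<Rightarrow> real) \<Rightarrow> bool" where
  "smooth_fun g \<longleftrightarrow> (\<forall>bs p. pd bs g differentiable (at p))"

definition smooth_map :: "(real \<times> real \<Rightarrow> real \<times> real) \<Rightarrow> bool" where
  "smooth_map f \<longleftrightarrow> smooth_fun (\<lambda>p. fst (f p)) \<and> smooth_fun (\<lambda>p. snd (f p))"

definition Df :: "(real \<times> real \<Rightarrow> real \<times> real) \<Rightarrow> real \<times> real \<Rightarrow> real \<times> real \<Rightarrow> real \<times> real" where
  "Df f p v = (px (\<lambda>q. fst (f q)) p * fst v + py (\<lambda>q. fst (f q)) p * snd v,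
               px (\<lambda>q. snd (f q)) p * fst v + py (\<lambda>q. snd (f q)) p * snd v)"

definition Jac :: "(real \<times> real \<Rightarrow> real \<times> real) \<Rightarrow> real \<times> real \<Rightarrow> real" where
  "Jac f p = px (\<lambda>q. fst (f q)) p * py (\<lambda>q. snd (f q)) p
           - py (\<lambda>q. fst (f q)) p * px (\<lambda>q. snd (f q)) p"

definition dJ :: "(real \<times> real \<Rightarrow> real \<times> real) \<Rightarrow> real \<times> real \<Rightarrow> real \<times> real \<Rightarrow> real" where
  "dJ f p v = px (Jac f) p * fst v + py (Jac f) p * snd v"

definition Ffield :: "(real \<times> real \<Rightarrow> real \<times> real) \<Rightarrow> real \<times> real \<Rightarrow> real \<times> real" where
  "Ffield f p = Df f p (- py (Jac f) p, px (Jac f) p)"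

definition one_generic :: "(real \<times> real \<Rightarrow> real \<times> real) \<Rightarrow> bool" where
  "one_generic f \<longleftrightarrow> (\<forall>p. Jac f p = 0 \<longrightarrow> (px (Jac f) p, py (Jac f) p) \<noteq> (0, 0))"

text \<open>Cusp point: p in S_1(f) = J^{-1}(0), T_p S_1(f) (= ker dJ(p)) equals ker Df(p), and
  p is a simple zero of dJ(xi) on S_1(f), for a smooth vector field xi that is nonvanishing
  and lies in ker Df along S_1(f) near p. Simple zero: the derivative of dJ(xi) along the
  tangent direction (-J_y, J_x)(p) of S_1(f) at p is nonzero.\<close>
definition cusp_point :: "(real \<times> real \<Rightarrow> real \<times> real) \<Rightarrow> real \<times> real \<Rightarrow> bool" where
  "cusp_point f p \<longleftrightarrow>
     Jac f p = 0 \<and>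
     {v. dJ f p v = 0} = {v. Df f p v = 0} \<and>
     (\<exists>U \<xi>. open U \<and> p \<in> U \<and> smooth_map \<xi> \<and>
        (\<forall>q\<in>U. Jac f q = 0 \<longrightarrow> \<xi> q \<noteq> 0 \<and> Df f q (\<xi> q) = 0) \<and>
        (let \<phi> = (\<lambda>q. dJ f q (\<xi> q)) in
           \<phi> p = 0 \<and>
           px \<phi> p * (- py (Jac f) p) + py \<phi> p * px (Jac f) p \<noteq> 0))"

definition rot :: "real \<Rightarrow> real \<Rightarrow> real \<times> real \<Rightarrow> real \<times> real" where
  "rot a b v = (a * fst v - b * snd v, b * fst v + a * snd v)"

end

theory Submission
  imports Defs
begin

text \<open>
  Rotations act on Jacobians by multiplication with (a^2 + b^2)(c^2 + d^2), so g = L \<circ> f \<circ> R has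
  Jacobian J \<circ> R, and the partials of g at 0 are L applied to Df(0) on the columns (c, d) and
  (-d, c) of R. Choose R so that (c, d) is a unit vector in ker dJ(0) with dJ(0)(-d, c) > 0;
  the cusp condition ker dJ(0) = ker Df(0) gives Df(0)(c, d) = 0 and Df(0)(-d, c) \<noteq> 0, and L
  is then chosen to rotate Df(0)(-d, c) onto the positive first axis. Only differentiability,
  the kernel condition of the cusp and dJ(0) \<noteq> 0 are used.
\<close>

lemma partials_of_has_derivative:
  assumes "(h has_derivative D) (at p)"
  shows "px h p = D (1, 0)" "py h p = D (0, 1)"
proof -
  have lin: "linear D" using assms has_derivative_linear by blast
  have hD: "(h has_derivative D) (at (fst p, snd p))" using assms by simp
  have "((\<lambda>t. (t, snd p)) has_derivative (\<lambda>t. (t, 0))) (at (fst p))"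
    by (auto intro!: derivative_eq_intros)
  from has_derivative_compose[OF this hD]
  have "((\<lambda>t. h (t, snd p)) has_derivative (\<lambda>t. D (t, 0))) (at (fst p))" .
  moreover have "(\<lambda>t. D (t, 0)) = (*) (D (1, 0))"
  proof
    fix t :: real
    have "D (t, 0) = D (t *\<^sub>R (1, 0))" by simp
    then show "D (t, 0) = D (1, 0) * t"
      by (simp only: linear_cmul[OF lin] real_scaleR_def mult.commute)
  qed
  ultimately have "((\<lambda>t. h (t, snd p)) has_field_derivative D (1, 0)) (at (fst p))"
    unfolding has_field_derivative_def by (simp only:)
  then show "px h p = D (1, 0)" unfolding px_def by (rule DERIV_imp_deriv)
  have "((\<lambda>t. (fst p, t)) has_derivative (\<lambda>t. (0, t))) (at (snd p))"
    by (auto intro!: derivative_eq_intros)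
  from has_derivative_compose[OF this hD]
  have "((\<lambda>t. h (fst p, t)) has_derivative (\<lambda>t. D (0, t))) (at (snd p))" .
  moreover have "(\<lambda>t. D (0, t)) = (*) (D (0, 1))"
  proof
    fix t :: real
    have "D (0, t) = D (t *\<^sub>R (0, 1))" by simp
    then show "D (0, t) = D (0, 1) * t"
      by (simp only: linear_cmul[OF lin] real_scaleR_def mult.commute)
  qed
  ultimately have "((\<lambda>t. h (fst p, t)) has_field_derivative D (0, 1)) (at (snd p))"
    unfolding has_field_derivative_def by (simp only:)
  then show "py h p = D (0, 1)" unfolding py_def by (rule DERIV_imp_deriv)
qed

lemma has_derivative_partials:
  assumes "h differentiable (at p)"
  shows "(h has_derivative (\<lambda>v. px h p * fst v + py h p * snd v)) (at p)"
proof -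
  obtain D where D: "(h has_derivative D) (at p)" using assms differentiable_def by blast
  have lin: "linear D" using D has_derivative_linear by blast
  note partials = partials_of_has_derivative[OF D]
  have "D v = px h p * fst v + py h p * snd v" for v
  proof -
    have "D v = D (fst v *\<^sub>R (1, 0) + snd v *\<^sub>R (0, 1))" by (simp add: scaleR_prod_def)
    also have "\<dots> = fst v * D (1, 0) + snd v * D (0, 1)"
      by (simp only: linear_add[OF lin] linear_cmul[OF lin] real_scaleR_def)
    finally show ?thesis by (simp only: partials mult.commute)
  qed
  then have "D = (\<lambda>v. px h p * fst v + py h p * snd v)" by (rule ext)
  with D show ?thesis by simp
qed

lemma has_derivative_rot: "(rot c d has_derivative rot c d) (at q)"
  unfolding rot_def by (auto intro!: derivative_eq_intros)

lemma partials_comp_rot: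
  assumes "h differentiable (at (rot c d q))"
  shows "px (\<lambda>x. h (rot c d x)) q = px h (rot c d q) * c + py h (rot c d q) * d"
    and "py (\<lambda>x. h (rot c d x)) q = px h (rot c d q) * (- d) + py h (rot c d q) * c"
proof -
  let ?D = "\<lambda>v. px h (rot c d q) * fst (rot c d v) + py h (rot c d q) * snd (rot c d v)"
  have "((\<lambda>x. h (rot c d x)) has_derivative ?D) (at q)"
    using has_derivative_compose[OF has_derivative_rot has_derivative_partials[OF assms]] .
  from partials_of_has_derivative[OF this]
  show "px (\<lambda>x. h (rot c d x)) q = px h (rot c d q) * c + py h (rot c d q) * d"
    and "py (\<lambda>x. h (rot c d x)) q = px h (rot c d q) * (- d) + py h (rot c d q) * c"
    by (simp_all add: rot_def)
qed

lemma partials_lincomb: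
  assumes "u differentiable (at q)" "v differentiable (at q)"
  shows "px (\<lambda>x. a * u x + b * v x) q = a * px u q + b * px v q"
    and "py (\<lambda>x. a * u x + b * v x) q = a * py u q + b * py v q"
proof -
  have "((\<lambda>x. a * u x + b * v x) has_derivative
          (\<lambda>w. a * (px u q * fst w + py u q * snd w) + b * (px v q * fst w + py v q * snd w))) (at q)"
    using has_derivative_partials[OF assms(1)] has_derivative_partials[OF assms(2)]
    by (auto intro!: derivative_eq_intros)
  from partials_of_has_derivative[OF this]
  show "px (\<lambda>x. a * u x + b * v x) q = a * px u q + b * px v q"
    and "py (\<lambda>x. a * u x + b * v x) q = a * py u q + b * py v q"
    by simp_all
qed

lemma partials_rot_comp_rot:
  fixes f :: "real \<times> real \<Rightarrow> real \<times> real" and a b c d :: real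
  defines "g \<equiv> rot a b \<circ> f \<circ> rot c d"
  assumes "(\<lambda>p. fst (f p)) differentiable (at (rot c d q))"
    and "(\<lambda>p. snd (f p)) differentiable (at (rot c d q))"
  shows "(px (\<lambda>p. fst (g p)) q, px (\<lambda>p. snd (g p)) q) = rot a b (Df f (rot c d q) (c, d))"
    and "(py (\<lambda>p. fst (g p)) q, py (\<lambda>p. snd (g p)) q) = rot a b (Df f (rot c d q) (- d, c))"
proof -
  let ?f1 = "\<lambda>x. fst (f (rot c d x))" and ?f2 = "\<lambda>x. snd (f (rot c d x))"
  have "rot c d differentiable (at q)"
    using has_derivative_rot differentiable_def by blast
  then have diff: "?f1 differentiable (at q)" "?f2 differentiable (at q)"
    using differentiable_chain_at assms(2,3) by (auto simp: o_def)
  have comps: "(\<lambda>p. fst (g p)) = (\<lambda>x. a * ?f1 x + (- b) * ?f2 x)"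
    "(\<lambda>p. snd (g p)) = (\<lambda>x. b * ?f1 x + a * ?f2 x)"
    unfolding g_def by (auto simp: rot_def)
  show "(px (\<lambda>p. fst (g p)) q, px (\<lambda>p. snd (g p)) q) = rot a b (Df f (rot c d q) (c, d))"
    and "(py (\<lambda>p. fst (g p)) q, py (\<lambda>p. snd (g p)) q) = rot a b (Df f (rot c d q) (- d, c))"
    unfolding comps partials_lincomb[OF diff] partials_comp_rot[OF assms(2)]
      partials_comp_rot[OF assms(3)]
    by (simp_all add: Df_def rot_def algebra_simps)
qed

lemma Jac_rot_comp_rot:
  fixes f :: "real \<times> real \<Rightarrow> real \<times> real"
  assumes "(\<lambda>p. fst (f p)) differentiable (at (rot c d q))"
    and "(\<lambda>p. snd (f p)) differentiable (at (rot c d q))"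
  shows "Jac (rot a b \<circ> f \<circ> rot c d) q = (a\<^sup>2 + b\<^sup>2) * (c\<^sup>2 + d\<^sup>2) * Jac f (rot c d q)"
proof -
  let ?X = "rot a b (Df f (rot c d q) (c, d))" and ?Y = "rot a b (Df f (rot c d q) (- d, c))"
  have "Jac (rot a b \<circ> f \<circ> rot c d) q = fst ?X * snd ?Y - fst ?Y * snd ?X"
    unfolding Jac_def using partials_rot_comp_rot[OF assms, of a b] by (metis fst_conv snd_conv)
  also have "\<dots> = (a\<^sup>2 + b\<^sup>2) * (c\<^sup>2 + d\<^sup>2) * Jac f (rot c d q)"
    by (simp add: Jac_def Df_def rot_def power2_eq_square algebra_simps)
  finally show ?thesis .
qed

lemma smooth_map_differentiable:
  assumes "smooth_map f"
  shows "(\<lambda>p. fst (f p)) differentiable (at p)" "(\<lambda>p. snd (f p)) differentiable (at p)"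
    and "Jac f differentiable (at p)"
proof -
  have "pd bs (\<lambda>p. fst (f p)) differentiable (at p)" "pd bs (\<lambda>p. snd (f p)) differentiable (at p)"
    for bs
    using assms unfolding smooth_map_def smooth_fun_def by blast+
  from this[of "[]"] this[of "[True]"] this[of "[False]"]
  show "(\<lambda>p. fst (f p)) differentiable (at p)" "(\<lambda>p. snd (f p)) differentiable (at p)"
    and "Jac f differentiable (at p)"
    unfolding Jac_def by (auto intro!: derivative_intros simp: fun_diff_def)
qed

lemma exists_unit_orthogonal:
  fixes u v :: real
  assumes "(u, v) \<noteq> (0, 0)"
  shows "\<exists>c d. c\<^sup>2 + d\<^sup>2 = 1 \<and> u * c + v * d = 0 \<and> v * c - u * d > 0"
proof -
  define n where "n = sqrt (u\<^sup>2 + v\<^sup>2)"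
  have pos: "u\<^sup>2 + v\<^sup>2 > 0" using assms by (simp add: sum_power2_gt_zero_iff)
  then have n: "n > 0" "n\<^sup>2 = u\<^sup>2 + v\<^sup>2" unfolding n_def by simp_all
  have "(v / n)\<^sup>2 + (- u / n)\<^sup>2 = (u\<^sup>2 + v\<^sup>2) / n\<^sup>2"
    by (simp add: power_divide add_divide_distrib)
  moreover have "v * (v / n) - u * (- u / n) = n"
    using n by (simp add: field_simps power2_eq_square)
  ultimately show ?thesis
    using n pos by (intro exI[of _ "v / n"] exI[of _ "- u / n"]) (auto simp: power2_eq_square)
qed

theorem mainTheorem13:
  fixes f :: "real \<times> real \<Rightarrow> real \<times> real"
  assumes "smooth_map f"
    and "one_generic f"
    and "cusp_point f (0, 0)"
    and "f (0, 0) = (0, 0)"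
    and "dim (range (Df f (0, 0))) = 1"
    and "(px (Jac f) (0, 0), py (Jac f) (0, 0)) \<noteq> (0, 0)"
    and "Ffield f (0, 0) = (0, 0)"
  shows "\<exists>a b c d. a\<^sup>2 + b\<^sup>2 = 1 \<and> c\<^sup>2 + d\<^sup>2 = 1 \<and>
           (let g = rot a b \<circ> f \<circ> rot c d;
                g1 = (\<lambda>p. fst (g p)); g2 = (\<lambda>p. snd (g p)) in
              px g1 (0, 0) = 0 \<and> px g2 (0, 0) = 0 \<and> py g2 (0, 0) = 0 \<and>
              py g1 (0, 0) \<noteq> 0 \<and>
              px (Jac g) (0, 0) = 0 \<and> py (Jac g) (0, 0) \<noteq> 0)"
proof -
  note diff = smooth_map_differentiable[OF assms(1)]
  have ker: "dJ f (0, 0) v = 0 \<longleftrightarrow> Df f (0, 0) v = 0" for v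
    using assms(3) unfolding cusp_point_def by blast
  obtain c d where cd: "c\<^sup>2 + d\<^sup>2 = 1" "dJ f (0, 0) (c, d) = 0" "dJ f (0, 0) (- d, c) > 0"
    using exists_unit_orthogonal[OF assms(6)] unfolding dJ_def by (auto simp: algebra_simps)
  obtain w1 w2 where w: "Df f (0, 0) (- d, c) = (w1, w2)" by fastforce
  with cd(3) ker[of "(- d, c)"] have "(w2, w1) \<noteq> (0, 0)" by (auto simp: zero_prod_def)
  then obtain a b where ab: "a\<^sup>2 + b\<^sup>2 = 1" "w2 * a + w1 * b = 0" "w1 * a - w2 * b > 0"
    using exists_unit_orthogonal by blast
  define g where "g = rot a b \<circ> f \<circ> rot c d"
  have R0: "rot c d (0, 0) = (0, 0)" by (simp add: rot_def)
  have Jg: "Jac g = (\<lambda>q. Jac f (rot c d q))"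
    using Jac_rot_comp_rot[OF diff(1,2)] ab(1) cd(1) unfolding g_def by auto
  have "(px (\<lambda>p. fst (g p)) (0, 0), px (\<lambda>p. snd (g p)) (0, 0)) = (0, 0)"
    "(py (\<lambda>p. fst (g p)) (0, 0), py (\<lambda>p. snd (g p)) (0, 0)) = (w1 * a - w2 * b, 0)"
    using partials_rot_comp_rot[OF diff(1,2), of a b c d "(0, 0)"] ker[of "(c, d)"] cd(2) w ab(2)
    unfolding g_def R0 by (auto simp: rot_def zero_prod_def algebra_simps)
  moreover have "px (Jac g) (0, 0) = dJ f (0, 0) (c, d)" "py (Jac g) (0, 0) = dJ f (0, 0) (- d, c)"
    unfolding Jg partials_comp_rot[OF diff(3)] R0 dJ_def by simp_all
  ultimately show ?thesis
    using ab cd unfolding g_def Let_def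
    by (intro exI[of _ a] exI[of _ b] exI[of _ c] exI[of _ d]) auto
qed

end
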